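(* Let $(U(n))_{n\geqslant 0}$ be an arithmetic progression of positive integers, $U(n)=U(0)+nd$ with $d$ an integer, and let $S(n)=\overline{U(0)U(1)\cdots U(n-1)U(n)U(n-1)\cdots U(1)U(0)}$ for $n\geqslant 0$ (so $S(0)=U(0)$; e.g. for $U(n)=n+1$ this is $1,121,12321,\ldots$). Let $l$ be a positive integer. Then for every $n\geqslant 0$ such that $U(n)$, $U(n+1)$, $U(n+2)$, $U(n+3)$ all have exactly $l$ decimal digits, $$S(n+3) - \left(1+10^l+10^{2l}\right) S(n+2) + \left(10^l+10^{2l}+10^{3l}\right) S(n+1) - 10^{3l}\, S(n) = 0.$$
   Context: For positive integers $a_0,\ldots,a_k$, $\overline{a_0a_1\cdots a_k}$ denotes the integer whose decimal expansion is the decimal expansion of $a_0$ followed by that of $a_1$, ..., followed by that of $a_k$. The sequence $S$ is the concatenation of the right-concatenation $\overline{U(0)\cdots U(n)}$ with the left-concatenation $\overline{U(n-1)\cdots U(0)}$. *)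

theory Defs
  imports Main
begin

(* number of decimal digits of a positive integer (ndigits 0 = 0 by convention; only used on positives) *)
fun ndigits :: "nat \<Rightarrow> nat" where
  "ndigits n = (if n < 10 then (if n = 0 then 0 else 1) else Suc (ndigits (n div 10)))"

definition dconcat :: "nat \<Rightarrow> nat \<Rightarrow> nat" where
  "dconcat a b = a * 10 ^ ndigits b + b"

definition dconcat_list :: "nat list \<Rightarrow> nat" where
  "dconcat_list xs = foldl dconcat 0 xs"

definition S_seq :: "(nat \<Rightarrow> nat) \<Rightarrow> nat \<Rightarrow> nat" where
  "S_seq U n = dconcat_list (map U [0..<Suc n] @ rev (map U [0..<n]))"

end

(* Write S(m) = A(m) * 10^D(m) + B(m), where A(m) is the ascending half U(0)...U(m), B(m) the
   descending half U(m-1)...U(0) and D(m) the number of digits of B(m). While the terms have l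
   digits, put x = 10^l: one step multiplies the left half T = A * 10^D by x^2 and the place value
   10^D by x, up to terms linear in U. Hence (t - 1)(t - x)(t - x^2), the characteristic polynomial
   of the recurrence, annihilates each half up to multiples of k x^k, and these cancel because the
   two halves read the arithmetic progression in opposite directions. *)

theory Submission
  imports Defs
begin

(* The defining equation of ndigits would be unfolded by simp without end. *)
declare ndigits.simps [simp del]

lemma dconcat_0_left [simp]: "dconcat 0 y = y"
  by (simp add: dconcat_def)

lemma foldl_dconcat:
  "foldl dconcat a ys = a * 10 ^ sum_list (map ndigits ys) + foldl dconcat 0 ys"
proof (induction ys arbitrary: a)
  case Nil
  then show ?case by simp
next
  case (Cons y ys)
  let ?s = "sum_list (map ndigits ys)"
  have "foldl dconcat a (y # ys) = dconcat a y * 10 ^ ?s + foldl dconcat 0 ys"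
    using Cons.IH[of "dconcat a y"] by simp
  moreover have "foldl dconcat 0 (y # ys) = y * 10 ^ ?s + foldl dconcat 0 ys"
    using Cons.IH[of y] by simp
  ultimately show ?case
    using dconcat_def[of a y] by (simp add: algebra_simps power_add)
qed

lemma dconcat_list_append:
  "dconcat_list (xs @ ys) = dconcat_list xs * 10 ^ sum_list (map ndigits ys) + dconcat_list ys"
  unfolding dconcat_list_def by (simp add: foldl_dconcat[of "foldl dconcat 0 xs"])

lemma dconcat_list_singleton [simp]: "dconcat_list [y] = y"
  by (simp add: dconcat_list_def)

definition ascending_part :: "(nat \<Rightarrow> nat) \<Rightarrow> nat \<Rightarrow> nat" where
  "ascending_part U m = dconcat_list (map U [0..<Suc m])"

definition descending_part :: "(nat \<Rightarrow> nat) \<Rightarrow> nat \<Rightarrow> nat" where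
  "descending_part U m = dconcat_list (rev (map U [0..<m]))"

definition digit_count :: "(nat \<Rightarrow> nat) \<Rightarrow> nat \<Rightarrow> nat" where
  "digit_count U m = (\<Sum>i<m. ndigits (U i))"

lemma digit_count_Suc [simp]: "digit_count U (Suc m) = digit_count U m + ndigits (U m)"
  by (simp add: digit_count_def)

lemma sum_list_ndigits_upt: "sum_list (map (ndigits \<circ> U) [0..<m]) = digit_count U m"
  by (induction m) (simp_all add: digit_count_def)

lemma S_seq_split:
  "S_seq U m = ascending_part U m * 10 ^ digit_count U m + descending_part U m"
  unfolding S_seq_def ascending_part_def descending_part_def dconcat_list_append
  by (simp add: rev_map[symmetric] sum_list_ndigits_upt)

lemma ascending_part_Suc:
  "ascending_part U (Suc m) = ascending_part U m * 10 ^ ndigits (U (Suc m)) + U (Suc m)"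
proof -
  have "map U [0..<Suc (Suc m)] = map U [0..<Suc m] @ [U (Suc m)]" by simp
  then show ?thesis
    unfolding ascending_part_def by (simp only: dconcat_list_append) simp
qed

lemma descending_part_Suc:
  "descending_part U (Suc m) = U m * 10 ^ digit_count U m + descending_part U m"
proof -
  have "rev (map U [0..<Suc m]) = [U m] @ rev (map U [0..<m])" by simp
  then show ?thesis
    unfolding descending_part_def
    by (simp only: dconcat_list_append) (simp add: rev_map[symmetric] sum_list_ndigits_upt)
qed

lemma mirrored_halves_recurrence:
  fixes T B P u :: "nat \<Rightarrow> 'a::comm_ring_1" and x d :: 'a
  assumes T_Suc: "\<And>k. k < 3 \<Longrightarrow> T (Suc k) = x\<^sup>2 * T k + x * u (Suc k) * P k"
    and B_Suc: "\<And>k. k < 3 \<Longrightarrow> B (Suc k) = B k + u k * P k"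
    and P_Suc: "\<And>k. k < 3 \<Longrightarrow> P (Suc k) = x * P k"
    and arith: "\<And>k. u k = u 0 + of_nat k * d"
  shows "(T 3 + B 3) - (1 + x + x\<^sup>2) * (T 2 + B 2) + (x + x\<^sup>2 + x ^ 3) * (T 1 + B 1)
           - x ^ 3 * (T 0 + B 0) = 0"
proof -
  have T: "T 1 = x\<^sup>2 * T 0 + x * u 1 * P 0" "T 2 = x\<^sup>2 * T 1 + x * u 2 * P 1"
    "T 3 = x\<^sup>2 * T 2 + x * u 3 * P 2"
    using T_Suc[of 0] T_Suc[of 1] T_Suc[of 2] by (simp_all add: numeral_eq_Suc)
  have B: "B 1 = B 0 + u 0 * P 0" "B 2 = B 1 + u 1 * P 1" "B 3 = B 2 + u 2 * P 2"
    using B_Suc[of 0] B_Suc[of 1] B_Suc[of 2] by (simp_all add: numeral_eq_Suc)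
  have P: "P 1 = x * P 0" "P 2 = x * P 1"
    using P_Suc[of 0] P_Suc[of 1] by (simp_all add: numeral_eq_Suc)
  have u: "u 1 = u 0 + d" "u 2 = u 0 + 2 * d" "u 3 = u 0 + 3 * d"
    using arith[of 1] arith[of 2] arith[of 3] by simp_all
  show ?thesis
    unfolding T B P u by (simp add: algebra_simps power2_eq_square power3_eq_cube)
qed

theorem lemma3:
  fixes U :: "nat \<Rightarrow> nat" and d :: int and l n :: nat
  assumes pos: "\<forall>k. U k > 0"
    and arith: "\<forall>k. int (U k) = int (U 0) + int k * d"
    and l_pos: "l > 0"
    and digits: "\<forall>i\<le>3. ndigits (U (n + i)) = l"
  shows "int (S_seq U (n + 3)) - (1 + 10 ^ l + 10 ^ (2 * l)) * int (S_seq U (n + 2))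
           + (10 ^ l + 10 ^ (2 * l) + 10 ^ (3 * l)) * int (S_seq U (n + 1))
           - 10 ^ (3 * l) * int (S_seq U n) = 0"
proof -
  define x :: int where "x = 10 ^ l"
  define P where "P k = (10::int) ^ digit_count U (n + k)" for k
  define T where "T k = int (ascending_part U (n + k)) * P k" for k
  define B where "B k = int (descending_part U (n + k))" for k
  define u where "u k = int (U (n + k))" for k
  have window: "ndigits (U (n + k)) = l" "ndigits (U (Suc (n + k))) = l" if "k < 3" for k
    using digits that by (auto simp flip: add_Suc_right)
  have "T (Suc k) = x\<^sup>2 * T k + x * u (Suc k) * P k" if "k < 3" for k
    using window[OF that]
    by (simp add: T_def P_def x_def u_def ascending_part_Suc power_add power2_eq_square algebra_simps)
  moreover have "B (Suc k) = B k + u k * P k" if "k < 3" for k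
    using window[OF that] by (simp add: B_def P_def u_def descending_part_Suc)
  moreover have "P (Suc k) = x * P k" if "k < 3" for k
    using window[OF that] by (simp add: P_def x_def power_add)
  moreover have "u k = u 0 + of_nat k * d" for k
    using arith[rule_format, of "n + k"] arith[rule_format, of n] by (simp add: u_def algebra_simps)
  ultimately have recurrence: "(T 3 + B 3) - (1 + x + x\<^sup>2) * (T 2 + B 2) + (x + x\<^sup>2 + x ^ 3) * (T 1 + B 1)
      - x ^ 3 * (T 0 + B 0) = 0"
    by (rule mirrored_halves_recurrence)
  have S: "int (S_seq U (n + k)) = T k + B k" for k
    by (simp add: S_seq_split T_def B_def P_def)
  have powers: "(10::int) ^ (2 * l) = x\<^sup>2" "(10::int) ^ (3 * l) = x ^ 3"
    by (simp_all add: x_def power_mult[symmetric] mult.commute)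
  show ?thesis
    using recurrence S[of 0] S[of 1] S[of 2] S[of 3] unfolding powers x_def[symmetric] by simp
qed

end
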